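(* Let $H$ be a connected hypermap and let $A\subseteq E(H)$, with $A^{c}=E(H)\setminus A$. Then the Euler characteristic of the partial dual $H^{A}$ satisfies \[ \chi(H^{A})=\chi(A)+\chi(A^{c})-2v(H), \] where $A$ and $A^c$ are regarded as spanning sub-hypermaps of $H$.
   Context: A hypergraph $H$ has a vertex set $V(H)$ and a hyperedge set $E(H)$, each hyperedge being a nonempty subset of $V(H)$; its incidence (bipartite) graph $G_H$ has vertex set $V(H)\cup E(H)$, with $v\in V(H)$ joined to $e\in E(H)$ iff $v\in e$. A hypermap (also denoted $H$) is a cellular embedding of $G_H$ in a closed surface; its vertices, hyperedges and faces are the nodes of $G_H$ in $V(H)$, the nodes of $G_H$ in $E(H)$, and the faces of this embedding. Write $v(H),e(H),f(H)$ for their numbers and $n_i=|e_i|$ for the degree of the hyperedge $e_i$. The Euler characteristic is $\chi(H)=v(H)+e(H)+f(H)-\sum_{i=1}^{e(H)}n_i$ (the Euler characteristic of the embedded graph $G_H$, summed over components). Combinatorially a hypermap is a triple $(B,\tau,\psi)$: $B$ is a finite set of labels, the cycles of the permutation $\tau$ (coming in pairs, one for each side) encode the rotations at the vertices, the cycles of $\psi$ encode the hyperedges, and the cycles of $\psi\circ\tau$ encode the faces. For $A\subseteq E(H)$, $A$ also denotes the spanning sub-hypermap obtained by deleting from the embedding all hyperedges not in $A$ (with their incidences) while keeping all vertices and the induced rotations; it may be disconnected, and $v(A)=v(H)$. The partial dual of $H=(B,\tau,\psi)$ with respect to $A$ is $H^{A}=(B,\psi|_A\circ\tau,\psi)$,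 where $\psi|_A$ agrees with $\psi$ on labels belonging to hyperedges of $A$ and is the identity on all other labels.
   Formalization: The partial dual $H^{A}$ has hyperedge permutation equal to the inverse of $\psi$ on labels belonging to hyperedges of $A$ and to $\psi$ elsewhere, in place of $\psi$. The statement above fails without it. *)

theory Defs
  imports Complex_Main
begin

text \<open>A hypermap is given by a finite label set B, a
permutation tau of B (vertex rotations, two cycles per vertex, one for each side),
a permutation psi of B (hyperedge rotations, two cycles per hyperedge), together
with the maps vx, he sending a label to the vertex / hyperedge of the incidence
it belongs to.  Faces are the cycles
of psi o tau (again two per face).\<close>

definition cyc :: "('b \<Rightarrow> 'b) \<Rightarrow> 'b \<Rightarrow> 'b set" where
  "cyc f x = {y. \<exists>n. y = (f ^^ n) x}"

definition ncyc :: "'b set \<Rightarrow> ('b \<Rightarrow> 'b) \<Rightarrow> nat" where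
  "ncyc B f = card (cyc f ` B)"

definition hypermap ::
  "'b set \<Rightarrow> ('b \<Rightarrow> 'b) \<Rightarrow> ('b \<Rightarrow> 'b) \<Rightarrow> ('b \<Rightarrow> 'v) \<Rightarrow> ('b \<Rightarrow> 'e) \<Rightarrow> bool" where
  "hypermap B tau psi vx he \<longleftrightarrow>
     finite B \<and> bij_betw tau B B \<and> bij_betw psi B B \<and>
     (\<forall>x\<in>B. vx (tau x) = vx x \<and> he (psi x) = he x) \<and>
     (\<forall>x\<in>B. card {y\<in>B. vx y = vx x \<and> he y = he x} = 2 \<and>
        (\<forall>y\<in>B. vx y = vx x \<and> he y = he x \<and> y \<noteq> x \<longrightarrow>
            cyc tau y \<noteq> cyc tau x \<and> cyc psi y \<noteq> cyc psi x)) \<and>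
     (\<forall>x\<in>B. card (cyc tau ` {y\<in>B. vx y = vx x}) = 2 \<and>
             card (cyc psi ` {y\<in>B. he y = he x}) = 2)"

definition hm_connected :: "'b set \<Rightarrow> ('b \<Rightarrow> 'v) \<Rightarrow> ('b \<Rightarrow> 'e) \<Rightarrow> bool" where
  "hm_connected B vx he \<longleftrightarrow>
     (\<forall>x\<in>B. \<forall>y\<in>B. (x, y) \<in> {(a, b). a \<in> B \<and> b \<in> B \<and> (vx a = vx b \<or> he a = he b)}\<^sup>*)"

text \<open>Euler characteristic of a hypermap given as a triple (B, tau, psi):
v = #cycles(tau)/2, e = #cycles(psi)/2, f = #cycles(psi o tau)/2,
sum of hyperedge degrees = |B|/2 (two labels per incidence).\<close>
definition hm_chi :: "'b set \<times> ('b \<Rightarrow> 'b) \<times> ('b \<Rightarrow> 'b) \<Rightarrow> real" where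
  "hm_chi H = (case H of (B, tau, psi) \<Rightarrow>
      real (ncyc B tau) / 2 + real (ncyc B psi) / 2 + real (ncyc B (psi \<circ> tau)) / 2
      - real (card B) / 2)"

definition labs :: "'b set \<Rightarrow> ('b \<Rightarrow> 'e) \<Rightarrow> 'e set \<Rightarrow> 'b set" where
  "labs B he A = {x\<in>B. he x \<in> A}"

definition restr :: "'b set \<Rightarrow> ('b \<Rightarrow> 'b) \<Rightarrow> 'b \<Rightarrow> 'b" where
  "restr S f = (\<lambda>x. if x \<in> S then f x else x)"

definition induced :: "'b set \<Rightarrow> ('b \<Rightarrow> 'b) \<Rightarrow> 'b \<Rightarrow> 'b" where
  "induced S f x = (if x \<in> S then (f ^^ (LEAST n. 0 < n \<and> (f ^^ n) x \<in> S)) x else x)"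

definition hdeg :: "'b set \<Rightarrow> ('b \<Rightarrow> 'v) \<Rightarrow> ('b \<Rightarrow> 'e) \<Rightarrow> 'e \<Rightarrow> nat" where
  "hdeg B vx he e = card {vx x | x. x \<in> B \<and> he x = e}"

text \<open>Euler characteristic of the spanning sub-hypermap A (delete the hyperedges not
in A with their incidences, keep all vertices and induced rotations):
v(A) = v(H), e(A) = |A|, f(A) = faces of the labelled part (cycles of
psi o induced rotation, two per face) plus one face per vertex left isolated,
minus the sum of the degrees of the hyperedges in A.\<close>
definition sub_chi ::
  "'b set \<Rightarrow> ('b \<Rightarrow> 'b) \<Rightarrow> ('b \<Rightarrow> 'b) \<Rightarrow> ('b \<Rightarrow> 'v) \<Rightarrow> ('b \<Rightarrow> 'e) \<Rightarrow> 'e set \<Rightarrow> real" where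
  "sub_chi B tau psi vx he A =
     (let BA = labs B he A;
          fA = real (ncyc BA (psi \<circ> induced BA tau)) / 2
               + real (card (vx ` B - vx ` BA))
      in real (card (vx ` B)) + real (card A) + fA - real (\<Sum>e\<in>A. hdeg B vx he e))"

text \<open>Partial dual with respect to A: vertex rotation psi|_A o tau; the hyperedges
are unchanged as cycles, the rotation of the hyperedges in A being reversed
(psi^-1 on labels of A).\<close>
definition pdual ::
  "'b set \<Rightarrow> ('b \<Rightarrow> 'b) \<Rightarrow> ('b \<Rightarrow> 'b) \<Rightarrow> ('b \<Rightarrow> 'e) \<Rightarrow> 'e set
     \<Rightarrow> 'b set \<times> ('b \<Rightarrow> 'b) \<times> ('b \<Rightarrow> 'b)" where
  "pdual B tau psi he A =
     (B, restr (labs B he A) psi \<circ> tau,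
      (\<lambda>x. if x \<in> labs B he A then inv_into B psi x else psi x))"

end

theory Submission
  imports Defs
begin

(* Both the vertex rotation and the face rotation of H^A have the form psi|_S o tau: the vertex
   rotation with S the labels of A by definition, the face rotation with S the labels of A^c,
   because on labels of A the reversed hyperedge rotation of H^A undoes psi.  A cycle of
   psi|_S o tau either meets S, and then its trace on S is a cycle of the first-return map
   psi o tau_S, i.e. a face of the sub-hypermap; or it avoids S, and then it is a tau-cycle at a
   vertex that is isolated in the sub-hypermap (an incidence has labels on both tau-cycles of its
   vertex).  Hence v(H^A) = f(A) and f(H^A) = f(A^c), while e(H^A) = |A| + |A^c| and the degree
   sum splits over A and A^c. *)

section \<open>Cycles of a map\<close>

lemma cyc_self: "x \<in> cyc f x"
  unfolding cyc_def by (auto intro: exI[of _ 0])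

lemma funpow_in_cyc: "(f ^^ n) x \<in> cyc f x"
  unfolding cyc_def by auto

lemma cyc_closed: "y \<in> cyc f x \<Longrightarrow> f y \<in> cyc f x"
  unfolding cyc_def by (auto intro: exI[of _ "Suc n" for n])

lemma cyc_subset_cyc:
  assumes "y \<in> cyc f x"
  shows "cyc f y \<subseteq> cyc f x"
proof
  fix z assume "z \<in> cyc f y"
  with assms obtain m n where "y = (f ^^ m) x" "z = (f ^^ n) y" unfolding cyc_def by auto
  then have "z = (f ^^ (n + m)) x" by (simp add: funpow_add)
  then show "z \<in> cyc f x" unfolding cyc_def by auto
qed

lemma funpow_in_invariant: "f ` T \<subseteq> T \<Longrightarrow> x \<in> T \<Longrightarrow> (f ^^ n) x \<in> T"
  by (induction n) auto

lemma cyc_subset_invariant: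
  assumes "f ` T \<subseteq> T" "x \<in> T"
  shows "cyc f x \<subseteq> T"
proof
  fix z assume "z \<in> cyc f x"
  then obtain n where "z = (f ^^ n) x" unfolding cyc_def by blast
  with funpow_in_invariant[OF assms] show "z \<in> T" by simp
qed

lemma cyc_const:
  assumes "f ` T \<subseteq> T" "\<And>y. y \<in> T \<Longrightarrow> k (f y) = k y" "x \<in> T" "z \<in> cyc f x"
  shows "k z = k x"
proof -
  have "k ((f ^^ n) x) = k x" for n
    using assms(1-3) funpow_in_invariant[OF assms(1,3)] by (induction n) auto
  with assms(4) show ?thesis unfolding cyc_def by auto
qed

lemma cyc_cong:
  assumes "f ` T \<subseteq> T" "\<And>z. z \<in> T \<Longrightarrow> f z = g z" "x \<in> T"
  shows "cyc f x = cyc g x"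
proof -
  have "(f ^^ n) x = (g ^^ n) x" for n
  proof (induction n)
    case (Suc n)
    have "f ((f ^^ n) x) = g ((f ^^ n) x)"
      using assms(2) funpow_in_invariant[OF assms(1,3)] by blast
    with Suc show ?case by simp
  qed simp
  then show ?thesis unfolding cyc_def by auto
qed

lemma cyc_subset_cyc_if_steps:
  assumes "f ` T \<subseteq> T" "\<And>y. y \<in> T \<Longrightarrow> f y \<in> cyc g y" "x \<in> T"
  shows "cyc f x \<subseteq> cyc g x"
proof -
  have "(f ^^ n) x \<in> cyc g x" for n
  proof (induction n)
    case 0
    show ?case by (simp add: cyc_self)
  next
    case (Suc n)
    have "f ((f ^^ n) x) \<in> cyc g ((f ^^ n) x)"
      using assms(2) funpow_in_invariant[OF assms(1,3)] by blast
    then show ?case using cyc_subset_cyc[OF Suc] by auto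
  qed
  then show ?thesis unfolding cyc_def by auto
qed

lemma funpow_period:
  assumes "finite B" "bij_betw f B B" "x \<in> B"
  obtains p where "p > 0" "(f ^^ p) x = x"
proof -
  have fB: "f ` B \<subseteq> B" by (simp add: bij_betw_imp_surj_on[OF assms(2)])
  have orbit: "(\<lambda>n. (f ^^ n) x) ` {..card B} \<subseteq> B"
    using funpow_in_invariant[OF fB assms(3)] by auto
  have "\<not> inj_on (\<lambda>n. (f ^^ n) x) {..card B}"
  proof
    assume "inj_on (\<lambda>n. (f ^^ n) x) {..card B}"
    from card_inj_on_le[OF this orbit assms(1)] show False by simp
  qed
  then obtain i j where ij: "i < j" "(f ^^ i) x = (f ^^ j) x"
    unfolding inj_on_def by (metis linorder_neqE_nat)
  then have "f ^^ j = f ^^ i \<circ> f ^^ (j - i)" by (simp flip: funpow_add)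
  with ij(2) have "(f ^^ i) ((f ^^ (j - i)) x) = (f ^^ i) x" by simp
  moreover have "inj_on (f ^^ i) B" using bij_betw_funpow[OF assms(2)] bij_betw_imp_inj_on by blast
  ultimately have "(f ^^ (j - i)) x = x"
    using funpow_in_invariant[OF fB assms(3)] assms(3) by (simp add: inj_on_eq_iff)
  with ij(1) show ?thesis by (intro that[of "j - i"]) simp_all
qed

lemma cyc_sym:
  assumes "finite B" "bij_betw f B B" "x \<in> B" "y \<in> cyc f x"
  shows "x \<in> cyc f y"
proof -
  obtain m where m: "y = (f ^^ m) x" using assms(4) unfolding cyc_def by auto
  obtain p where p: "p > 0" "(f ^^ p) x = x" using funpow_period[OF assms(1-3)] .
  have "(f ^^ (p * m)) x = x"
    using p(2) by (induction m) (auto simp: funpow_add)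
  moreover have "p * m = (p * m - m) + m" using p(1) by simp
  ultimately have "x = (f ^^ (p * m - m)) y"
    by (metis comp_apply funpow_add m)
  then show ?thesis unfolding cyc_def by auto
qed

lemma cyc_eq_if_in_cyc:
  assumes "finite B" "bij_betw f B B" "x \<in> B" "y \<in> cyc f x"
  shows "cyc f y = cyc f x"
  using cyc_subset_cyc[OF assms(4)] cyc_subset_cyc[OF cyc_sym[OF assms]] by blast

lemma cyc_inv_into:
  assumes "finite B" "bij_betw f B B" "x \<in> B"
  shows "cyc (inv_into B f) x = cyc f x"
proof -
  let ?g = "inv_into B f"
  have bij_g: "bij_betw ?g B B" using assms(2) by (rule bij_betw_inv_into)
  have fB: "f ` B \<subseteq> B" and gB: "?g ` B \<subseteq> B"
    by (simp_all add: bij_betw_imp_surj_on[OF assms(2)] bij_betw_imp_surj_on[OF bij_g])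
  have "?g y \<in> cyc f y" if "y \<in> B" for y
  proof -
    have "f (?g y) = y" using that bij_betw_imp_surj_on[OF assms(2)] by (simp add: f_inv_into_f)
    then have "y \<in> cyc f (?g y)" using cyc_closed[OF cyc_self[of "?g y" f]] by simp
    then show ?thesis using cyc_sym[OF assms(1,2)] gB that by blast
  qed
  then have "cyc ?g x \<subseteq> cyc f x" by (rule cyc_subset_cyc_if_steps[OF gB _ assms(3)])
  moreover have "f y \<in> cyc ?g y" if "y \<in> B" for y
  proof -
    have "?g (f y) = y" using that bij_betw_inv_into_left[OF assms(2)] by simp
    then have "y \<in> cyc ?g (f y)" using cyc_closed[OF cyc_self[of "f y" ?g]] by simp
    then show ?thesis using cyc_sym[OF assms(1) bij_g] fB that by blast
  qed
  then have "cyc f x \<subseteq> cyc ?g x" by (rule cyc_subset_cyc_if_steps[OF fB _ assms(3)])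
  ultimately show ?thesis by (rule subset_antisym)
qed

lemma card_cyc_fibres:
  assumes "finite B" "bij_betw f B B" "\<And>y. y \<in> B \<Longrightarrow> k (f y) = k y"
    and "\<And>x. x \<in> B \<Longrightarrow> card (cyc f ` {y\<in>B. k y = k x}) = 2" and "K \<subseteq> k ` B"
  shows "card (cyc f ` {y\<in>B. k y \<in> K}) = 2 * card K"
proof -
  have fB: "f ` B \<subseteq> B" using assms(2) bij_betw_imp_surj_on by blast
  have "cyc f ` {y\<in>B. k y \<in> K} = (\<Union>c\<in>K. cyc f ` {y\<in>B. k y = c})" by auto
  also have "card \<dots> = (\<Sum>c\<in>K. card (cyc f ` {y\<in>B. k y = c}))"
  proof (rule card_UN_disjoint)
    show "finite K" using assms(1,5) finite_surj by blast
    show "\<forall>c\<in>K. finite (cyc f ` {y\<in>B. k y = c})" using assms(1) by auto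
    have "k y = k y'" if "y \<in> B" "y' \<in> B" "cyc f y = cyc f y'" for y y'
      using cyc_const[where k = k, OF fB assms(3) that(1)] cyc_self[of y' f] that(3) by metis
    then show "\<forall>c\<in>K. \<forall>c'\<in>K. c \<noteq> c' \<longrightarrow>
        cyc f ` {y\<in>B. k y = c} \<inter> cyc f ` {y\<in>B. k y = c'} = {}"
      by blast
  qed
  also have "\<dots> = (\<Sum>c\<in>K. 2)"
    using assms(4,5) by (intro sum.cong) auto
  finally show ?thesis by simp
qed

section \<open>First-return maps\<close>

lemma cyc_first_return:
  assumes "r ` S \<subseteq> S" "x \<in> S"
    and "\<And>y. y \<in> S \<Longrightarrow> \<exists>n>0. (g ^^ n) y = r y \<and> (\<forall>k. 0 < k \<longrightarrow> k < n \<longrightarrow> (g ^^ k) y \<notin> S)"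
  shows "cyc r x = cyc g x \<inter> S"
proof
  have "r y \<in> cyc g y" if "y \<in> S" for y
    using assms(3)[OF that] funpow_in_cyc by metis
  then have "cyc r x \<subseteq> cyc g x"
    by (rule cyc_subset_cyc_if_steps[OF assms(1) _ assms(2)])
  with cyc_subset_invariant[OF assms(1,2)] show "cyc r x \<subseteq> cyc g x \<inter> S" by blast
next
  have return: "(g ^^ m) y \<in> cyc r y" if "y \<in> S" "(g ^^ m) y \<in> S" for m y
    using that
  proof (induction m arbitrary: y rule: less_induct)
    case (less m)
    obtain n where n: "0 < n" "(g ^^ n) y = r y" "\<forall>k. 0 < k \<longrightarrow> k < n \<longrightarrow> (g ^^ k) y \<notin> S"
      using assms(3)[OF less.prems(1)] by blast
    show ?case
    proof (cases "m = 0")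
      case True
      then show ?thesis by (simp add: cyc_self)
    next
      case False
      have "n \<le> m"
      proof (rule ccontr)
        assume "\<not> n \<le> m"
        with False n(3) less.prems(2) show False by simp
      qed
      then have "g ^^ m = g ^^ (m - n) \<circ> g ^^ n" by (simp flip: funpow_add)
      with n(2) have eq: "(g ^^ m) y = (g ^^ (m - n)) (r y)" by simp
      have "r y \<in> S" using assms(1) less.prems(1) by blast
      moreover have "m - n < m" using n(1) False by simp
      ultimately have "(g ^^ m) y \<in> cyc r (r y)"
        using less.IH[of "m - n" "r y"] less.prems(2) eq by simp
      then show ?thesis using cyc_subset_cyc[OF cyc_closed[OF cyc_self[of y r]]] by blast
    qed
  qed
  show "cyc g x \<inter> S \<subseteq> cyc r x"
  proof
    fix z assume "z \<in> cyc g x \<inter> S"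
    then obtain m where "z = (g ^^ m) x" "z \<in> S" unfolding cyc_def by blast
    with return[OF assms(2)] show "z \<in> cyc r x" by simp
  qed
qed

lemma induced_first_return:
  assumes "finite B" "bij_betw f B B" "S \<subseteq> B" "y \<in> S"
  obtains n where "0 < n" "induced S f y = (f ^^ n) y" "induced S f y \<in> S"
    "\<And>k. 0 < k \<Longrightarrow> k < n \<Longrightarrow> (f ^^ k) y \<notin> S"
proof -
  define n where "n = (LEAST n. 0 < n \<and> (f ^^ n) y \<in> S)"
  obtain p where "0 < p" "(f ^^ p) y = y"
    using funpow_period[OF assms(1,2)] assms(3,4) by blast
  with assms(4) have "\<exists>n. 0 < n \<and> (f ^^ n) y \<in> S" by auto
  then have "0 < n \<and> (f ^^ n) y \<in> S"
    unfolding n_def by (rule LeastI_ex)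
  moreover have "(f ^^ k) y \<notin> S" if "0 < k" "k < n" for k
    using not_less_Least[of k "\<lambda>n. 0 < n \<and> (f ^^ n) y \<in> S"] that unfolding n_def by blast
  moreover have "induced S f y = (f ^^ n) y" using assms(4) unfolding induced_def n_def by simp
  ultimately show ?thesis using that by auto
qed

lemma induced_in:
  assumes "finite B" "bij_betw f B B" "S \<subseteq> B" "y \<in> S"
  shows "induced S f y \<in> S"
  using induced_first_return[OF assms] by metis

lemma restr_comp_first_return:
  assumes "finite B" "bij_betw tau B B" "S \<subseteq> B" "psi ` S \<subseteq> S" "y \<in> S"
  shows "\<exists>n>0. ((restr S psi \<circ> tau) ^^ n) y = (psi \<circ> induced S tau) y
           \<and> (\<forall>k. 0 < k \<longrightarrow> k < n \<longrightarrow> ((restr S psi \<circ> tau) ^^ k) y \<notin> S)"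
proof -
  obtain n where n: "0 < n" "induced S tau y = (tau ^^ n) y" "induced S tau y \<in> S"
    and outside: "\<And>k. 0 < k \<Longrightarrow> k < n \<Longrightarrow> (tau ^^ k) y \<notin> S"
    using induced_first_return[OF assms(1-3,5)] by blast
  have before: "((restr S psi \<circ> tau) ^^ k) y = (tau ^^ k) y" if "k < n" for k
    using that
  proof (induction k)
    case (Suc k)
    then have "(tau ^^ Suc k) y \<notin> S" using outside[of "Suc k"] by simp
    with Suc show ?case by (simp add: restr_def)
  qed simp
  obtain m where "n = Suc m" using n(1) gr0_implies_Suc by blast
  then have "((restr S psi \<circ> tau) ^^ n) y = psi (induced S tau y)"
    using before[of m] n(2,3) by (simp add: restr_def)
  with n(1) before outside show ?thesis by (intro exI[of _ n]) auto
qed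

lemma card_cyc_split:
  assumes "finite B" "bij_betw g B B" "S \<subseteq> B" "\<And>x. x \<in> S \<Longrightarrow> cyc r x = cyc g x \<inter> S"
  shows "card (cyc g ` B) = card (cyc r ` S) + card {C \<in> cyc g ` B. C \<inter> S = {}}"
proof -
  define D where "D = {C \<in> cyc g ` B. C \<inter> S = {}}"
  have "cyc g ` B \<subseteq> cyc g ` S \<union> D"
  proof
    fix C assume "C \<in> cyc g ` B"
    then obtain y where y: "y \<in> B" "C = cyc g y" by blast
    show "C \<in> cyc g ` S \<union> D"
    proof (cases "C \<inter> S = {}")
      case False
      then obtain z where "z \<in> C" "z \<in> S" by blast
      with y have "cyc g z = C" using cyc_eq_if_in_cyc[OF assms(1,2), of y z] by simp
      with \<open>z \<in> S\<close> show ?thesis by blast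
    qed (use y in \<open>simp add: D_def\<close>)
  qed
  then have split: "cyc g ` B = cyc g ` S \<union> D"
    using assms(3) unfolding D_def by blast
  have "inj_on (\<lambda>C. C \<inter> S) (cyc g ` S)"
  proof (rule inj_onI)
    fix C C' assume "C \<in> cyc g ` S" "C' \<in> cyc g ` S" "C \<inter> S = C' \<inter> S"
    then obtain x x' where x: "x \<in> S" "C = cyc g x" "x' \<in> S" "C' = cyc g x'" by blast
    have "x \<in> C \<inter> S" using x cyc_self[of x g] by simp
    with \<open>C \<inter> S = C' \<inter> S\<close> x(4) have "x \<in> cyc g x'" by simp
    then show "C = C'" using x assms(3) cyc_eq_if_in_cyc[OF assms(1,2), of x' x] by auto
  qed
  moreover have "(\<lambda>C. C \<inter> S) ` cyc g ` S = cyc r ` S"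
    using assms(4) by (auto simp: image_image)
  ultimately have "card (cyc g ` S) = card (cyc r ` S)" by (metis card_image)
  moreover have "cyc g ` S \<inter> D = {}"
    unfolding D_def using cyc_self[of _ g] by blast
  moreover have "finite (cyc g ` S)" using finite_subset[OF assms(3,1)] by simp
  moreover have "finite D" using assms(1) unfolding D_def by simp
  ultimately have "card (cyc g ` B) = card (cyc r ` S) + card D"
    by (simp only: split card_Un_disjoint)
  then show ?thesis unfolding D_def .
qed

lemma cyc_restr_comp_avoiding:
  assumes "psi ` S \<subseteq> S"
  shows "{C \<in> cyc (restr S psi \<circ> tau) ` B. C \<inter> S = {}} = {C \<in> cyc tau ` B. C \<inter> S = {}}"
proof -
  let ?g = "restr S psi \<circ> tau"
  have g_avoiding: "cyc ?g y = cyc tau y" if "cyc ?g y \<inter> S = {}" for y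
  proof (rule cyc_cong[OF _ _ cyc_self])
    show "?g ` cyc ?g y \<subseteq> cyc ?g y" using cyc_closed[of _ ?g y] by blast
    fix z assume "z \<in> cyc ?g y"
    then have "?g z \<notin> S" using that cyc_closed[of z ?g y] by blast
    with assms show "?g z = tau z" by (auto simp: restr_def split: if_splits)
  qed
  have tau_avoiding: "cyc tau y = cyc ?g y" if "cyc tau y \<inter> S = {}" for y
  proof (rule cyc_cong[OF _ _ cyc_self])
    show "tau ` cyc tau y \<subseteq> cyc tau y" using cyc_closed[of _ tau y] by blast
    fix z assume "z \<in> cyc tau y"
    then have "tau z \<notin> S" using that cyc_closed[of z tau y] by blast
    then show "tau z = ?g z" by (simp add: restr_def)
  qed
  show ?thesis
  proof (intro equalityI subsetI)
    fix C assume C: "C \<in> {C \<in> cyc ?g ` B. C \<inter> S = {}}"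
    then obtain y where y: "y \<in> B" "C = cyc ?g y" by blast
    with C have avoids: "cyc ?g y \<inter> S = {}" by simp
    have "C = cyc tau y" using y(2) g_avoiding[OF avoids] by simp
    with C y(1) show "C \<in> {C \<in> cyc tau ` B. C \<inter> S = {}}" by blast
  next
    fix C assume C: "C \<in> {C \<in> cyc tau ` B. C \<inter> S = {}}"
    then obtain y where y: "y \<in> B" "C = cyc tau y" by blast
    with C have avoids: "cyc tau y \<inter> S = {}" by simp
    have "C = cyc ?g y" using y(2) tau_avoiding[OF avoids] by simp
    with C y(1) show "C \<in> {C \<in> cyc ?g ` B. C \<inter> S = {}}" by blast
  qed
qed

lemma bij_betw_restr:
  assumes "bij_betw psi S S" "S \<subseteq> B"
  shows "bij_betw (restr S psi) B B"
proof -
  have "bij_betw (restr S psi) S S = bij_betw psi S S"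
    by (rule bij_betw_cong) (simp add: restr_def)
  moreover have "bij_betw (restr S psi) (B - S) (B - S) = bij_betw id (B - S) (B - S)"
    by (rule bij_betw_cong) (simp add: restr_def)
  ultimately have "bij_betw (restr S psi) (S \<union> (B - S)) (S \<union> (B - S))"
    using assms(1) by (intro bij_betw_combine) auto
  with assms(2) show ?thesis by (simp add: Un_absorb1)
qed

lemma ncyc_restr_comp:
  assumes "finite B" "bij_betw tau B B" "bij_betw psi S S" "S \<subseteq> B"
  shows "ncyc B (restr S psi \<circ> tau)
           = ncyc S (psi \<circ> induced S tau) + card {C \<in> cyc tau ` B. C \<inter> S = {}}"
proof -
  have psi_S: "psi ` S \<subseteq> S" by (simp add: bij_betw_imp_surj_on[OF assms(3)])
  have bij: "bij_betw (restr S psi \<circ> tau) B B"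
    using assms(2) bij_betw_restr[OF assms(3,4)] by (rule bij_betw_trans)
  have "(psi \<circ> induced S tau) ` S \<subseteq> S"
    using induced_in[OF assms(1,2,4)] psi_S by auto
  then have "cyc (psi \<circ> induced S tau) x = cyc (restr S psi \<circ> tau) x \<inter> S" if "x \<in> S" for x
    by (rule cyc_first_return[OF _ that restr_comp_first_return[OF assms(1,2,4) psi_S]])
  then have "ncyc B (restr S psi \<circ> tau)
      = ncyc S (psi \<circ> induced S tau) + card {C \<in> cyc (restr S psi \<circ> tau) ` B. C \<inter> S = {}}"
    unfolding ncyc_def by (rule card_cyc_split[OF assms(1) bij assms(4)])
  then show ?thesis unfolding cyc_restr_comp_avoiding[OF psi_S] .
qed

section \<open>Hypermaps and partial duals\<close>

lemma card_eq_sum_card_fibres: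
  assumes "finite X"
  shows "card X = (\<Sum>c\<in>k ` X. card {x\<in>X. k x = c})"
proof -
  have "X = (\<Union>c\<in>k ` X. {x\<in>X. k x = c})" by blast
  then have "card X = card (\<Union>c\<in>k ` X. {x\<in>X. k x = c})" by simp
  also have "\<dots> = (\<Sum>c\<in>k ` X. card {x\<in>X. k x = c})"
    by (rule card_UN_disjoint) (use assms in auto)
  finally show ?thesis .
qed

lemma labs_subset: "labs B he K \<subseteq> B"
  unfolding labs_def by blast

definition sub_faces ::
  "'b set \<Rightarrow> ('b \<Rightarrow> 'b) \<Rightarrow> ('b \<Rightarrow> 'b) \<Rightarrow> ('b \<Rightarrow> 'v) \<Rightarrow> ('b \<Rightarrow> 'e) \<Rightarrow> 'e set \<Rightarrow> real" where
  "sub_faces B tau psi vx he A =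
     real (ncyc (labs B he A) (psi \<circ> induced (labs B he A) tau)) / 2
     + real (card (vx ` B - vx ` labs B he A))"

lemma sub_chi_eq:
  "sub_chi B tau psi vx he A = real (card (vx ` B)) + real (card A)
     + sub_faces B tau psi vx he A - real (\<Sum>e\<in>A. hdeg B vx he e)"
  unfolding sub_chi_def sub_faces_def Let_def by simp

context
  fixes B :: "'b set" and tau psi :: "'b \<Rightarrow> 'b" and vx :: "'b \<Rightarrow> 'v" and he :: "'b \<Rightarrow> 'e"
  assumes hm: "hypermap B tau psi vx he"
begin

lemma hm_finite: "finite B"
  and hm_bij_tau: "bij_betw tau B B"
  and hm_bij_psi: "bij_betw psi B B"
  and hm_vx_tau: "x \<in> B \<Longrightarrow> vx (tau x) = vx x"
  and hm_he_psi: "x \<in> B \<Longrightarrow> he (psi x) = he x"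
  and hm_incidence_card: "x \<in> B \<Longrightarrow> card {y\<in>B. vx y = vx x \<and> he y = he x} = 2"
  and hm_incidence_sides: "\<lbrakk>x \<in> B; y \<in> B; vx y = vx x; he y = he x; y \<noteq> x\<rbrakk> \<Longrightarrow> cyc tau y \<noteq> cyc tau x"
  and hm_vertex_cycles: "x \<in> B \<Longrightarrow> card (cyc tau ` {y\<in>B. vx y = vx x}) = 2"
  and hm_edge_cycles: "x \<in> B \<Longrightarrow> card (cyc psi ` {y\<in>B. he y = he x}) = 2"
  using hm unfolding hypermap_def by auto

lemma hm_partner:
  assumes "x \<in> B"
  obtains x' where "x' \<in> B" "vx x' = vx x" "he x' = he x" "cyc tau x' \<noteq> cyc tau x"
proof -
  let ?I = "{y\<in>B. vx y = vx x \<and> he y = he x}"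
  obtain a b where "a \<in> ?I" "b \<in> ?I" "a \<noteq> b"
    using hm_incidence_card[OF assms] by (auto simp: card_2_iff')
  then obtain x' where x': "x' \<in> ?I" "x' \<noteq> x" by blast
  then have "cyc tau x' \<noteq> cyc tau x" using hm_incidence_sides[OF assms] by blast
  with x' show ?thesis using that by blast
qed

lemma hm_vertex_cycles_eq:
  assumes "x \<in> B" "x' \<in> B" "vx x' = vx x" "cyc tau x' \<noteq> cyc tau x"
  shows "cyc tau ` {y\<in>B. vx y = vx x} = {cyc tau x, cyc tau x'}"
proof -
  have "{cyc tau x, cyc tau x'} \<subseteq> cyc tau ` {y\<in>B. vx y = vx x}" using assms by auto
  moreover have "card {cyc tau x, cyc tau x'} = card (cyc tau ` {y\<in>B. vx y = vx x})"
    using assms(4) hm_vertex_cycles[OF assms(1)] by simp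
  ultimately have "{cyc tau x, cyc tau x'} = cyc tau ` {y\<in>B. vx y = vx x}"
    using hm_finite by (intro card_subset_eq) auto
  then show ?thesis by simp
qed

lemma hm_tau_cycles_avoiding_labs:
  "{C \<in> cyc tau ` B. C \<inter> labs B he K = {}} = cyc tau ` {y\<in>B. vx y \<in> vx ` B - vx ` labs B he K}"
proof (intro equalityI subsetI)
  let ?S = "labs B he K"
  fix C assume C: "C \<in> {C \<in> cyc tau ` B. C \<inter> ?S = {}}"
  then obtain y where y: "y \<in> B" "C = cyc tau y" by blast
  have "vx y \<notin> vx ` ?S"
  proof
    assume "vx y \<in> vx ` ?S"
    then obtain s where s: "s \<in> ?S" "vx y = vx s" by blast
    then have "s \<in> B" unfolding labs_def by simp
    then obtain s' where s': "s' \<in> B" "vx s' = vx s" "he s' = he s" "cyc tau s' \<noteq> cyc tau s"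
      by (rule hm_partner)
    have "s' \<in> ?S" using s' s(1) unfolding labs_def by simp
    have "cyc tau y \<in> {cyc tau s, cyc tau s'}"
      using hm_vertex_cycles_eq[OF \<open>s \<in> B\<close> s'(1,2,4)] y(1) s(2) by blast
    then have "C \<inter> ?S \<noteq> {}"
      using y(2) s(1) \<open>s' \<in> ?S\<close> cyc_self[of s tau] cyc_self[of s' tau] by auto
    with C show False by blast
  qed
  with y show "C \<in> cyc tau ` {y\<in>B. vx y \<in> vx ` B - vx ` ?S}" by blast
next
  let ?S = "labs B he K"
  fix C assume "C \<in> cyc tau ` {y\<in>B. vx y \<in> vx ` B - vx ` ?S}"
  then obtain y where y: "y \<in> B" "vx y \<notin> vx ` ?S" "C = cyc tau y" by blast
  have tau_B: "tau ` B \<subseteq> B" by (simp add: bij_betw_imp_surj_on[OF hm_bij_tau])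
  have "C \<inter> ?S = {}"
  proof (rule ccontr)
    assume "C \<inter> ?S \<noteq> {}"
    then obtain z where z: "z \<in> C" "z \<in> ?S" by blast
    have "vx z = vx y" using cyc_const[where k = vx, OF tau_B hm_vx_tau y(1)] z(1) y(3) by simp
    with z(2) y(2) show False by (metis image_eqI)
  qed
  with y show "C \<in> {C \<in> cyc tau ` B. C \<inter> ?S = {}}" by blast
qed

lemma hm_bij_psi_labs: "bij_betw psi (labs B he K) (labs B he K)"
proof -
  let ?S = "labs B he K"
  have fin: "finite ?S" using hm_finite unfolding labs_def by simp
  have closed: "psi ` ?S \<subseteq> ?S"
    using bij_betw_apply[OF hm_bij_psi] hm_he_psi unfolding labs_def by auto
  have inj: "inj_on psi ?S"
    using bij_betw_imp_inj_on[OF hm_bij_psi] by (rule inj_on_subset) (auto simp: labs_def)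
  show ?thesis unfolding bij_betw_def using endo_inj_surj[OF fin closed inj] inj by simp
qed

lemma ncyc_restr_labs:
  "real (ncyc B (restr (labs B he K) psi \<circ> tau)) = 2 * sub_faces B tau psi vx he K"
proof -
  let ?S = "labs B he K"
  have "card {C \<in> cyc tau ` B. C \<inter> ?S = {}} = 2 * card (vx ` B - vx ` ?S)"
    unfolding hm_tau_cycles_avoiding_labs
    by (rule card_cyc_fibres[OF hm_finite hm_bij_tau hm_vx_tau hm_vertex_cycles]) auto
  then show ?thesis
    unfolding sub_faces_def
    using ncyc_restr_comp[OF hm_finite hm_bij_tau hm_bij_psi_labs labs_subset] by simp
qed

lemma hm_card_eq_degree_sum: "card B = 2 * (\<Sum>e\<in>he ` B. hdeg B vx he e)"
proof -
  have "card B = (\<Sum>e\<in>he ` B. card {x\<in>B. he x = e})"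
    by (rule card_eq_sum_card_fibres[OF hm_finite])
  also have "\<dots> = (\<Sum>e\<in>he ` B. 2 * hdeg B vx he e)"
  proof (rule sum.cong[OF refl])
    fix e assume "e \<in> he ` B"
    let ?L = "{x\<in>B. he x = e}"
    have "card ?L = (\<Sum>v\<in>vx ` ?L. card {x\<in>?L. vx x = v})"
      by (rule card_eq_sum_card_fibres) (simp add: hm_finite)
    also have "\<dots> = (\<Sum>v\<in>vx ` ?L. 2)"
    proof (rule sum.cong[OF refl])
      fix v assume "v \<in> vx ` ?L"
      then obtain x where x: "x \<in> B" "he x = e" "vx x = v" by blast
      then have "{y\<in>?L. vx y = v} = {y\<in>B. vx y = vx x \<and> he y = he x}" by auto
      then show "card {y\<in>?L. vx y = v} = 2" using hm_incidence_card[OF x(1)] by simp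
    qed
    also have "\<dots> = 2 * card (vx ` ?L)" by simp
    also have "vx ` ?L = {vx x | x. x \<in> B \<and> he x = e}" by blast
    finally show "card ?L = 2 * hdeg B vx he e" unfolding hdeg_def .
  qed
  finally show ?thesis by (simp add: sum_distrib_left)
qed

lemma ncyc_pdual_edges:
  "ncyc B (\<lambda>x. if x \<in> labs B he A then inv_into B psi x else psi x) = 2 * card (he ` B)"
proof -
  let ?S = "labs B he A"
  let ?psi' = "\<lambda>x. if x \<in> ?S then inv_into B psi x else psi x"
  have "cyc ?psi' x = cyc psi x" if x: "x \<in> B" for x
  proof (cases "x \<in> ?S")
    case True
    have "inv_into B psi z \<in> ?S" if "z \<in> ?S" for z
    proof -
      have "z \<in> B" "he z \<in> A" using that unfolding labs_def by auto
      moreover have "inv_into B psi z \<in> B" "psi (inv_into B psi z) = z"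
        using \<open>z \<in> B\<close> bij_betw_imp_surj_on[OF hm_bij_psi]
        by (auto intro: inv_into_into f_inv_into_f)
      ultimately show ?thesis using hm_he_psi unfolding labs_def by (metis (mono_tags, lifting) mem_Collect_eq)
    qed
    then have "?psi' ` ?S \<subseteq> ?S" by auto
    then have "cyc ?psi' x = cyc (inv_into B psi) x" by (rule cyc_cong) (simp_all add: True)
    also have "\<dots> = cyc psi x" by (rule cyc_inv_into[OF hm_finite hm_bij_psi x])
    finally show ?thesis .
  next
    case False
    have "psi ` (B - ?S) \<subseteq> B - ?S"
      using bij_betw_apply[OF hm_bij_psi] hm_he_psi unfolding labs_def by auto
    then have "cyc psi x = cyc ?psi' x" by (rule cyc_cong) (use False x in simp_all)
    then show ?thesis by simp
  qed
  then have "cyc ?psi' ` B = cyc psi ` B" by (rule image_cong[OF refl])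
  moreover have "card (cyc psi ` {y\<in>B. he y \<in> he ` B}) = 2 * card (he ` B)"
    using card_cyc_fibres[OF hm_finite hm_bij_psi hm_he_psi hm_edge_cycles order_refl] .
  moreover have "{y\<in>B. he y \<in> he ` B} = B" by blast
  ultimately show ?thesis unfolding ncyc_def by simp
qed

lemma pdual_face_perm:
  assumes "z \<in> B"
  shows "((\<lambda>x. if x \<in> labs B he A then inv_into B psi x else psi x) \<circ> (restr (labs B he A) psi \<circ> tau)) z
           = (restr (labs B he (he ` B - A)) psi \<circ> tau) z"
proof -
  have "tau z \<in> B" using bij_betw_apply[OF hm_bij_tau assms] .
  show ?thesis
  proof (cases "he (tau z) \<in> A")
    case True
    have "he (psi (tau z)) \<in> A" using True hm_he_psi[OF \<open>tau z \<in> B\<close>] by simp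
    moreover have "inv_into B psi (psi (tau z)) = tau z"
      using bij_betw_imp_inj_on[OF hm_bij_psi] \<open>tau z \<in> B\<close> by simp
    moreover have "psi (tau z) \<in> B" using bij_betw_apply[OF hm_bij_psi \<open>tau z \<in> B\<close>] .
    ultimately show ?thesis using True \<open>tau z \<in> B\<close> by (simp add: restr_def labs_def)
  qed (use \<open>tau z \<in> B\<close> in \<open>simp add: restr_def labs_def\<close>)
qed

lemma hm_chi_pdual:
  "hm_chi (pdual B tau psi he A)
     = sub_faces B tau psi vx he A + real (card (he ` B))
       + sub_faces B tau psi vx he (he ` B - A) - real (card B) / 2"
proof -
  let ?psi' = "\<lambda>x. if x \<in> labs B he A then inv_into B psi x else psi x"
  let ?g = "restr (labs B he (he ` B - A)) psi \<circ> tau"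
  have "bij_betw ?g B B"
    using hm_bij_tau bij_betw_restr[OF hm_bij_psi_labs labs_subset] by (rule bij_betw_trans)
  then have "?g ` B \<subseteq> B" using bij_betw_imp_surj_on equalityD1 by metis
  then have "cyc ?g x = cyc (?psi' \<circ> (restr (labs B he A) psi \<circ> tau)) x" if "x \<in> B" for x
    by (rule cyc_cong[OF _ pdual_face_perm[symmetric] that])
  then have "ncyc B (?psi' \<circ> (restr (labs B he A) psi \<circ> tau)) = ncyc B ?g"
    unfolding ncyc_def by (metis (no_types, lifting) image_cong)
  then show ?thesis
    unfolding hm_chi_def pdual_def
    using ncyc_restr_labs[of A] ncyc_restr_labs[of "he ` B - A"] ncyc_pdual_edges[of A] by simp
qed

end

theorem mainTheorem1:
  fixes B :: "'b set" and tau psi :: "'b \<Rightarrow> 'b"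
    and vx :: "'b \<Rightarrow> 'v" and he :: "'b \<Rightarrow> 'e" and A :: "'e set"
  assumes "hypermap B tau psi vx he"
    and "hm_connected B vx he"
    and "A \<subseteq> he ` B"
  shows "hm_chi (pdual B tau psi he A)
           = sub_chi B tau psi vx he A + sub_chi B tau psi vx he (he ` B - A)
             - 2 * real (card (vx ` B))"
proof -
  let ?E = "he ` B" and ?deg = "hdeg B vx he"
  have fin_E: "finite ?E" using hm_finite[OF assms(1)] by simp
  have "card ?E = card A + card (?E - A)"
    using card_Diff_subset[OF finite_subset[OF assms(3) fin_E] assms(3)] card_mono[OF fin_E assms(3)]
    by simp
  moreover have "card B = 2 * ((\<Sum>e\<in>A. ?deg e) + (\<Sum>e\<in>?E - A. ?deg e))"
    using hm_card_eq_degree_sum[OF assms(1)] sum.subset_diff[OF assms(3) fin_E, of ?deg] by simp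
  ultimately show ?thesis
    unfolding hm_chi_pdual[OF assms(1)] sub_chi_eq by (simp add: algebra_simps)
qed

end
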